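(* Let $f=\min\{0,X,Y,X+Y\}$. Then for all $N\ge1$, $\dim(U_N)\ge N\cdot\lfloor N/2\rfloor$, and consequently the entropy $H(f)=\lim_{N\to\infty}\dim(U_N)/N^2$ satisfies $H(f)\ge 1/2$; in particular $H(f)>0$.
   Context: For a tropical polynomial $f=\min_{1\le j\le m}\{a_j+t_{j,1}X+t_{j,2}Y\}$ (here $a_j=0$ and exponents $(0,0),(1,0),(0,1),(1,1)$) and $N\ge1$, let $T_N=\{0,\dots,N-1\}^2$ and consider variables $u(k_1,k_2)$, $(k_1,k_2)\in T_N$. For each shift $(s_1,s_2)\in\mathbb{Z}^2$ with all $(t_{j,1}+s_1,t_{j,2}+s_2)\in T_N$, the linearization is $\min_j\{a_j+u(t_{j,1}+s_1,t_{j,2}+s_2)\}$, satisfied by $u$ if the minimum is attained at least twice. $U_N\subset\mathbb{R}^{N^2}$ is the set of points satisfying all these linearizations (a finite union of convex polyhedra), $\dim$ is its dimension, and the entropy is $H(f)=\lim_{N\to\infty}\dim(U_N)/N^2$. *)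

theory Defs
  imports "HOL-Analysis.Analysis"
begin

text \<open>Points of the lattice: int \<times> int. A vector of R^(N^2) is a function
  u :: int \<times> int \<Rightarrow> real that vanishes outside T_N.\<close>

definition T :: "nat \<Rightarrow> (int \<times> int) set" where
  "T N = {0..<int N} \<times> {0..<int N}"

text \<open>A tropical polynomial in X,Y: a list of monomials (a_j, (t_j1, t_j2)),
  standing for min_j (a_j + t_j1 X + t_j2 Y).\<close>
type_synonym tpoly = "(real \<times> (int \<times> int)) list"

definition shiftpt :: "int \<times> int \<Rightarrow> int \<times> int \<Rightarrow> int \<times> int" where
  "shiftpt t s = (fst t + fst s, snd t + snd s)"

definition shift_ok :: "nat \<Rightarrow> tpoly \<Rightarrow> int \<times> int \<Rightarrow> bool" where
  "shift_ok N f s \<longleftrightarrow> (\<forall>j<length f. shiftpt (snd (f ! j)) s \<in> T N)"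

definition lin_val :: "tpoly \<Rightarrow> (int \<times> int \<Rightarrow> real) \<Rightarrow> int \<times> int \<Rightarrow> nat \<Rightarrow> real" where
  "lin_val f u s j = fst (f ! j) + u (shiftpt (snd (f ! j)) s)"

definition lin_sat :: "tpoly \<Rightarrow> (int \<times> int \<Rightarrow> real) \<Rightarrow> int \<times> int \<Rightarrow> bool" where
  "lin_sat f u s \<longleftrightarrow> (\<exists>i<length f. \<exists>j<length f. i \<noteq> j \<and>
      lin_val f u s i = lin_val f u s j \<and> (\<forall>l<length f. lin_val f u s i \<le> lin_val f u s l))"

definition U :: "nat \<Rightarrow> tpoly \<Rightarrow> (int \<times> int \<Rightarrow> real) set" where
  "U N f = {u. (\<forall>k. k \<notin> T N \<longrightarrow> u k = 0) \<and> (\<forall>s. shift_ok N f s \<longrightarrow> lin_sat f u s)}"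

text \<open>Dimension of a (finite union of convex polyhedra) S \<subseteq> R^(T_N): the largest d
  such that S contains a d-dimensional simplex, i.e. the convex hull of d+1
  affinely independent points. For a finite union of polyhedra this is the
  maximum of the dimensions of the pieces.\<close>
definition aff_indep :: "nat \<Rightarrow> nat \<Rightarrow> (nat \<Rightarrow> int \<times> int \<Rightarrow> real) \<Rightarrow> bool" where
  "aff_indep N d p \<longleftrightarrow> (\<forall>c :: nat \<Rightarrow> real.
     (\<forall>k\<in>T N. (\<Sum>i\<in>{1..d}. c i * (p i k - p 0 k)) = 0) \<longrightarrow> (\<forall>i\<in>{1..d}. c i = 0))"

definition simplex_in :: "nat \<Rightarrow> (nat \<Rightarrow> int \<times> int \<Rightarrow> real) \<Rightarrow> (int \<times> int \<Rightarrow> real) set \<Rightarrow> bool" where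
  "simplex_in d p S \<longleftrightarrow> (\<forall>w :: nat \<Rightarrow> real. (\<forall>i\<le>d. w i \<ge> 0) \<and> (\<Sum>i\<le>d. w i) = 1 \<longrightarrow>
     (\<lambda>k. \<Sum>i\<le>d. w i * p i k) \<in> S)"

definition polydim :: "nat \<Rightarrow> (int \<times> int \<Rightarrow> real) set \<Rightarrow> nat" where
  "polydim N S = Sup {d. \<exists>p. aff_indep N d p \<and> simplex_in d p S}"

definition f_sq :: tpoly where
  "f_sq = [(0, (0, 0)), (0, (1, 0)), (0, (0, 1)), (0, (1, 1))]"

definition entropy_seq :: "tpoly \<Rightarrow> nat \<Rightarrow> real" where
  "entropy_seq f N = real (polydim N (U N f)) / real N ^ 2"

end

theory Submission
  imports Defs "HOL-Library.Function_Algebras"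
begin

text \<open>Every unit square of the lattice contains a column with odd first coordinate, and the two
  monomials of f_sq supported on that column take the value 0 on any nonnegative u vanishing on
  odd columns. Hence U_N contains the nonnegative orthant of the functions supported on the even
  columns of T_N, which has dimension at least N * (N div 2); dividing by N^2 gives the entropy
  bound.\<close>

lemma sum_fun_apply: "(sum F A) x = (\<Sum>a\<in>A. F a x)"
  by (induction A rule: infinite_finite_induct) (auto simp: plus_fun_def zero_fun_def)

lemma (in vector_space) card_le_if_scalars_zero:
  assumes "finite I" and "finite B" and span: "v ` I \<subseteq> span B"
    and scalars_zero: "\<And>c. (\<Sum>i\<in>I. scale (c i) (v i)) = 0 \<Longrightarrow> \<forall>i\<in>I. c i = 0"
  shows "card I \<le> card B"
proof -
  have inj: "inj_on v I"
  proof (rule inj_onI, rule ccontr)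
    fix i j assume ij: "i \<in> I" "j \<in> I" "v i = v j" "i \<noteq> j"
    define c where "c l = (if l = i then 1 else if l = j then - 1 else 0 :: 'a)" for l
    have "(\<Sum>l\<in>I. scale (c l) (v l)) = (\<Sum>l\<in>{i, j}. scale (c l) (v l))"
      using ij \<open>finite I\<close> by (intro sum.mono_neutral_right) (auto simp: c_def)
    also have "\<dots> = 0" using ij by (simp add: c_def)
    finally have "c i = 0" using scalars_zero ij(1) by blast
    then show False by (simp add: c_def)
  qed
  have "independent (v ` I)"
  proof (rule independent_if_scalars_zero)
    fix f x assume f: "(\<Sum>x\<in>v ` I. scale (f x) x) = 0" and "x \<in> v ` I"
    have "(\<Sum>i\<in>I. scale (f (v i)) (v i)) = 0" using f by (simp add: sum.reindex[OF inj])
    moreover obtain i where "i \<in> I" "x = v i" using \<open>x \<in> v ` I\<close> by blast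
    ultimately show "f x = 0" using scalars_zero[of "\<lambda>i. f (v i)"] by simp
  qed (use \<open>finite I\<close> in simp)
  then have "card (v ` I) \<le> card B" using independent_span_bound \<open>finite B\<close> span by blast
  then show ?thesis by (simp add: card_image[OF inj])
qed

lemma vector_space_fun: "vector_space (\<lambda>(r::real) (f::'a \<Rightarrow> real) x. r * f x)"
  by unfold_locales (auto simp: plus_fun_def algebra_simps)

lemma finite_T: "finite (T N)"
  by (simp add: T_def)

lemma aff_indep_le_card_T:
  assumes "aff_indep N d p" shows "d \<le> card (T N)"
proof -
  interpret V: vector_space "\<lambda>(r::real) (f::int \<times> int \<Rightarrow> real) x. r * f x"
    by (rule vector_space_fun)
  define v where "v i k = (if k \<in> T N then p i k - p 0 k else 0)" for i k
  define e where "e t k = (if k = t then 1 else 0 :: real)" for t k :: "int \<times> int"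
  have v_expansion: "v i = (\<Sum>t\<in>T N. (\<lambda>k. v i t * e t k))" for i
    by (auto simp: fun_eq_iff sum_fun_apply e_def v_def finite_T if_distrib cong: if_cong)
  have "v i \<in> V.span (e ` T N)" for i
    by (subst v_expansion) (intro V.span_sum V.span_scale V.span_base imageI)
  moreover have "\<forall>i\<in>{1..d}. c i = 0" if "(\<Sum>i\<in>{1..d}. (\<lambda>k. c i * v i k)) = 0" for c
  proof -
    have "(\<Sum>i\<in>{1..d}. c i * (p i k - p 0 k)) = 0" if "k \<in> T N" for k
      using fun_cong[OF \<open>_ = 0\<close>, of k] that by (simp add: sum_fun_apply v_def)
    with assms show ?thesis unfolding aff_indep_def by blast
  qed
  ultimately have "card {1..d} \<le> card (e ` T N)"
    by (intro V.card_le_if_scalars_zero[where v = v]) (auto simp: finite_T)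
  also have "\<dots> \<le> card (T N)" by (rule card_image_le[OF finite_T])
  finally show ?thesis by simp
qed

text \<open>The bound from aff_indep_le_card_T is essential: the supremum of an unbounded set of
  naturals is a junk value.\<close>

lemma polydim_ge:
  assumes "aff_indep N d p" and "simplex_in d p S"
  shows "d \<le> polydim N S"
  unfolding polydim_def
proof (rule cSup_upper)
  show "bdd_above {d. \<exists>p. aff_indep N d p \<and> simplex_in d p S}"
    using aff_indep_le_card_T by (auto simp: bdd_above_def)
qed (use assms in blast)

lemma card_le_polydim_if_orthant_subset:
  assumes "A \<subseteq> T N"
    and orthant: "\<And>u. \<forall>k. 0 \<le> u k \<Longrightarrow> \<forall>k. k \<notin> A \<longrightarrow> u k = 0 \<Longrightarrow> u \<in> S"
  shows "card A \<le> polydim N S"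
proof -
  define d where "d = card A"
  obtain q where q: "bij_betw q {1..d} A"
    using ex_bij_betw_nat_finite_1 finite_subset[OF assms(1) finite_T] d_def by blast
  define p where "p i k = (if i \<noteq> 0 \<and> k = q i then 1 else 0 :: real)" for i k
  have "aff_indep N d p"
    unfolding aff_indep_def
  proof (intro allI impI ballI)
    fix c :: "nat \<Rightarrow> real" and i
    assume vanish: "\<forall>k\<in>T N. (\<Sum>l\<in>{1..d}. c l * (p l k - p 0 k)) = 0"
      and i: "i \<in> {1..d}"
    have "c i = (\<Sum>l\<in>{1..d}. if l = i then c l else 0)" using i by simp
    also have "\<dots> = (\<Sum>l\<in>{1..d}. c l * (p l (q i) - p 0 (q i)))"
      using q i by (intro sum.cong) (auto simp: p_def bij_betw_def inj_on_eq_iff)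
    also have "\<dots> = 0" using vanish bij_betwE[OF q] i assms(1) by blast
    finally show "c i = 0" .
  qed
  moreover have "simplex_in d p S"
    unfolding simplex_in_def
  proof (intro allI impI orthant)
    fix w :: "nat \<Rightarrow> real" and k assume "(\<forall>i\<le>d. 0 \<le> w i) \<and> sum w {..d} = 1"
    then show "0 \<le> (\<Sum>i\<le>d. w i * p i k)" by (intro sum_nonneg) (simp add: p_def)
  next
    fix w :: "nat \<Rightarrow> real" and k assume "k \<notin> A"
    then show "(\<Sum>i\<le>d. w i * p i k) = 0"
      using q by (auto simp: p_def bij_betw_def intro!: sum.neutral)
  qed
  ultimately show ?thesis unfolding d_def by (rule polydim_ge)
qed

lemma lin_sat_if_two_zero_terms:
  assumes "\<forall>l<length f. 0 \<le> lin_val f u s l"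
    and "i < length f" "j < length f" "i \<noteq> j"
    and "lin_val f u s i = 0" "lin_val f u s j = 0"
  shows "lin_sat f u s"
  using assms unfolding lin_sat_def by metis

lemma U_f_sq_memI:
  assumes "\<forall>k. k \<notin> T N \<longrightarrow> u k = 0" and nonneg: "\<forall>k. 0 \<le> u k"
    and odd_column: "\<forall>k. odd (fst k) \<longrightarrow> u k = 0"
  shows "u \<in> U N f_sq"
  unfolding U_def
proof (intro CollectI conjI allI impI)
  fix s :: "int \<times> int"
  define c :: nat where "c = (if odd (fst s) then 0 else 1)"
  have "c < 2" "odd (fst s + int c)" by (simp_all add: c_def)
  then have "f_sq ! c = (0, (int c, 0))" "f_sq ! (c + 2) = (0, (int c, 1))"
    by (auto simp: f_sq_def less_2_cases_iff)
  then have "lin_val f_sq u s c = 0" "lin_val f_sq u s (c + 2) = 0"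
    using odd_column \<open>odd (fst s + int c)\<close> by (simp_all add: lin_val_def shiftpt_def)
  moreover have "0 \<le> lin_val f_sq u s l" if "l < length f_sq" for l
  proof -
    have "fst (f_sq ! l) = 0" using that by (auto simp: f_sq_def less_Suc_eq)
    then show ?thesis using nonneg by (simp add: lin_val_def del: split_paired_All)
  qed
  ultimately show "lin_sat f_sq u s"
    using \<open>c < 2\<close>
    by (intro lin_sat_if_two_zero_terms[where i = c and j = "c + 2"]) (simp_all add: f_sq_def)
qed (use assms in blast)

lemma polydim_U_f_sq_ge: "N * (N div 2) \<le> polydim N (U N f_sq)"
proof -
  define A where "A = (\<lambda>(a, b). (2 * a, b)) ` ({0..<int (N div 2)} \<times> {0..<int N})"
  have "A \<subseteq> T N" by (auto simp: A_def T_def)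
  moreover have "card A = N * (N div 2)"
    unfolding A_def by (subst card_image) (auto simp: inj_on_def card_cartesian_product)
  moreover have "\<And>k. odd (fst k) \<Longrightarrow> k \<notin> A" by (auto simp: A_def)
  then have "u \<in> U N f_sq" if "\<forall>k. 0 \<le> u k" "\<forall>k. k \<notin> A \<longrightarrow> u k = 0" for u
    using that \<open>A \<subseteq> T N\<close> by (intro U_f_sq_memI) blast+
  ultimately show ?thesis using card_le_polydim_if_orthant_subset by metis
qed

lemma entropy_seq_f_sq_ge:
  assumes "N \<ge> 1"
  shows "1/2 - 1 / (2 * real N) \<le> entropy_seq f_sq N"
proof -
  have "N \<le> 2 * (N div 2) + 1" by presburger
  then have half: "(real N - 1) / 2 \<le> real (N div 2)" by (simp flip: of_nat_le_iff)
  have "1/2 - 1 / (2 * real N) = real N * ((real N - 1) / 2) / real N ^ 2"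
    using assms by (simp add: field_simps power2_eq_square)
  also have "\<dots> \<le> real N * real (N div 2) / real N ^ 2"
    using half by (intro divide_right_mono mult_left_mono) simp_all
  also have "\<dots> \<le> real (polydim N (U N f_sq)) / real N ^ 2"
    using polydim_U_f_sq_ge[of N] by (intro divide_right_mono) (simp_all flip: of_nat_mult)
  finally show ?thesis by (simp add: entropy_seq_def)
qed

theorem mainTheorem5:
  shows "(\<forall>N\<ge>1. N * (N div 2) \<le> polydim N (U N f_sq))
       \<and> (convergent (entropy_seq f_sq) \<longrightarrow>
            lim (entropy_seq f_sq) \<ge> 1/2 \<and> lim (entropy_seq f_sq) > 0)"
proof (intro conjI allI impI)
  show "N * (N div 2) \<le> polydim N (U N f_sq)" for N by (rule polydim_U_f_sq_ge)
  assume "convergent (entropy_seq f_sq)"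
  then have "entropy_seq f_sq \<longlonglongrightarrow> lim (entropy_seq f_sq)"
    by (simp add: convergent_LIMSEQ_iff)
  moreover have "(\<lambda>N. 1/2 - 1 / (2 * real N)) \<longlonglongrightarrow> 1/2"
    using tendsto_diff[OF tendsto_const lim_const_over_n, of "1/2" "1/2"] by simp
  ultimately have "1/2 \<le> lim (entropy_seq f_sq)"
    using entropy_seq_f_sq_ge by (intro LIMSEQ_le) auto
  then show "1/2 \<le> lim (entropy_seq f_sq)" "lim (entropy_seq f_sq) > 0" by auto
qed

end
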